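(* Every $f\in\mathcal C^\infty(\mathbb R^{\mathbb N})$ is locally cylindrical: for every $x\in\mathbb R^{\mathbb N}$ there exist an open neighbourhood $U$ of $x$, a finite set $N_0\subset\mathbb N$ and a continuous function $g$ on $\pi_{N_0}(U)$ such that $f|_U=g\circ\pi_{N_0}|_U$, where $\pi_{N_0}:\mathbb R^{\mathbb N}\to\mathbb R^{N_0}$ is the coordinate projection.
   Context: $\mathbb R^{\mathbb N}$ is the space of real sequences with the product topology. It carries the canonical $\mathcal C^\infty$ structure of a product: its structure curves are the maps $c:\mathbb R\to\mathbb R^{\mathbb N}$ all of whose components $c_n:\mathbb R\to\mathbb R$ are smooth, and $\mathcal C^\infty(\mathbb R^{\mathbb N})$ is the set of functions $f:\mathbb R^{\mathbb N}\to\mathbb R$ such that $f\circ c\in C^\infty(\mathbb R,\mathbb R)$ for every structure curve $c$. *)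

theory Defs
  imports "HOL-Analysis.Analysis"
begin

text \<open>R^N is modelled as the type nat \<Rightarrow> real, whose topology (HOL-Analysis,
Function_Topology) is the product topology.\<close>

definition smooth_real :: "(real \<Rightarrow> real) \<Rightarrow> bool" where
  "smooth_real h \<longleftrightarrow> (\<exists>D :: nat \<Rightarrow> real \<Rightarrow> real. D 0 = h \<and>
      (\<forall>n t. (D n has_real_derivative D (Suc n) t) (at t)))"

definition structure_curve :: "(real \<Rightarrow> (nat \<Rightarrow> real)) \<Rightarrow> bool" where
  "structure_curve c \<longleftrightarrow> (\<forall>n. smooth_real (\<lambda>t. c t n))"

definition Cinf_RN :: "((nat \<Rightarrow> real) \<Rightarrow> real) set" where
  "Cinf_RN = {f. \<forall>c. structure_curve c \<longrightarrow> smooth_real (f \<circ> c)}"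

text \<open>Coordinate projection onto R^{N0}; R^{N0} is identified with the functions
vanishing outside N0 (with the subspace product topology, i.e. the Euclidean one).\<close>
definition cyl_proj :: "nat set \<Rightarrow> (nat \<Rightarrow> real) \<Rightarrow> (nat \<Rightarrow> real)" where
  "cyl_proj N0 y = (\<lambda>i. if i \<in> N0 then y i else 0)"

end

theory Submission
  imports Defs "HOL-Computational_Algebra.Polynomial"
begin

text \<open>
  Gluing rescaled copies of a smooth step function shows that every sequence converging
  rapidly enough in each coordinate lies on a structure curve \<open>c\<close>, with \<open>c 0\<close> its limit.
  Since \<open>f \<circ> c\<close> is smooth, \<open>f\<close> is sequentially continuous along such sequences, hence
  continuous on every finite-dimensional slice through \<open>x\<close>. Moreover \<open>f\<close> depends only on
  finitely many coordinates near \<open>x\<close>: otherwise there are points \<open>Y\<^sub>k\<close>, \<open>Z\<^sub>k\<close> tending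
  rapidly to \<open>x\<close>, agreeing in the first \<open>k\<close> coordinates, with \<open>f Y\<^sub>k \<noteq> f Z\<^sub>k\<close>. A curve
  through \<open>Y\<^sub>0, Z\<^sub>0, Y\<^sub>1, Z\<^sub>1, \<dots>\<close> which spends much less time than \<open>\<bar>f Y\<^sub>k - f Z\<^sub>k\<bar>\<close>
  between \<open>Y\<^sub>k\<close> and \<open>Z\<^sub>k\<close> makes the derivative of \<open>f \<circ> c\<close> unbounded on a compact interval.
\<close>

section \<open>Smooth functions of one real variable\<close>

fun times_differentiable :: "nat \<Rightarrow> (real \<Rightarrow> real) \<Rightarrow> bool" where
  "times_differentiable 0 f = True"
| "times_differentiable (Suc n) f \<longleftrightarrow>
     (\<exists>f'. (\<forall>t. (f has_real_derivative f' t) (at t)) \<and> times_differentiable n f')"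

lemma times_differentiable_const: "times_differentiable n (\<lambda>t. c)"
  by (induction n arbitrary: c) (auto intro!: exI[of _ "\<lambda>t. 0"])

lemma times_differentiable_add:
  "times_differentiable n f \<Longrightarrow> times_differentiable n g \<Longrightarrow>
   times_differentiable n (\<lambda>t. f t + g t)"
proof (induction n arbitrary: f g)
  case (Suc n)
  then obtain f' g' where "\<forall>t. (f has_real_derivative f' t) (at t)" "times_differentiable n f'"
     "\<forall>t. (g has_real_derivative g' t) (at t)" "times_differentiable n g'" by auto
  then show ?case
    using Suc.IH by (auto intro!: exI[of _ "\<lambda>t. f' t + g' t"] derivative_intros)
qed simp

lemma times_differentiable_Suc_imp:
  "times_differentiable (Suc n) f \<Longrightarrow> times_differentiable n f"
  by (induction n arbitrary: f) auto

lemma times_differentiable_mult: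
  "times_differentiable n f \<Longrightarrow> times_differentiable n g \<Longrightarrow>
   times_differentiable n (\<lambda>t. f t * g t)"
proof (induction n arbitrary: f g)
  case (Suc n)
  then obtain f' g' where d: "\<forall>t. (f has_real_derivative f' t) (at t)" "times_differentiable n f'"
     "\<forall>t. (g has_real_derivative g' t) (at t)" "times_differentiable n g'" by auto
  have "times_differentiable n f" "times_differentiable n g"
    using Suc.prems times_differentiable_Suc_imp by blast+
  then have "times_differentiable n (\<lambda>t. f t * g' t + f' t * g t)"
    using Suc.IH d by (intro times_differentiable_add) auto
  moreover have "\<forall>t. ((\<lambda>t. f t * g t) has_real_derivative f t * g' t + f' t * g t) (at t)"
    using d by (auto intro!: derivative_eq_intros)
  ultimately show ?case by auto
qed simp

lemma times_differentiable_inverse: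
  "times_differentiable n g \<Longrightarrow> (\<forall>t. g t \<noteq> 0) \<Longrightarrow>
   times_differentiable n (\<lambda>t. inverse (g t))"
proof (induction n arbitrary: g)
  case (Suc n)
  then obtain g' where d: "\<forall>t. (g has_real_derivative g' t) (at t)" "times_differentiable n g'"
    by auto
  have "times_differentiable n (\<lambda>t. inverse (g t))"
    using Suc times_differentiable_Suc_imp by blast
  then have "times_differentiable n (\<lambda>t. g' t * (- 1) * inverse (g t) * inverse (g t))"
    using d by (intro times_differentiable_mult times_differentiable_const) auto
  moreover have "\<forall>t. ((\<lambda>t. inverse (g t)) has_real_derivative
      g' t * (- 1) * inverse (g t) * inverse (g t)) (at t)"
    using d Suc.prems by (auto intro!: derivative_eq_intros simp: field_simps power2_eq_square)
  ultimately show ?case by auto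
qed simp

lemma times_differentiable_affine:
  "times_differentiable n f \<Longrightarrow> times_differentiable n (\<lambda>t. f (a * t + b))"
proof (induction n arbitrary: f)
  case (Suc n)
  then obtain f' where d: "\<forall>t. (f has_real_derivative f' t) (at t)" "times_differentiable n f'"
    by auto
  have "times_differentiable n (\<lambda>t. f' (a * t + b) * a)"
    using Suc.IH d by (intro times_differentiable_mult times_differentiable_const) auto
  moreover have "\<forall>t. ((\<lambda>t. f (a * t + b)) has_real_derivative f' (a * t + b) * a) (at t)"
    using d by (auto intro!: derivative_eq_intros DERIV_chain2[where f=f])
  ultimately show ?case by auto
qed simp

lemma times_differentiable_deriv:
  assumes "times_differentiable (Suc n) f"
  shows "times_differentiable n (deriv f)" and "(f has_real_derivative deriv f t) (at t)"
proof -
  from assms obtain f' where f': "\<forall>t. (f has_real_derivative f' t) (at t)"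
    "times_differentiable n f'" by auto
  then have "deriv f = f'" by (auto intro!: ext DERIV_imp_deriv)
  then show "times_differentiable n (deriv f)" "(f has_real_derivative deriv f t) (at t)"
    using f' by auto
qed

lemma smooth_real_if_times_differentiable:
  assumes "\<forall>n. times_differentiable n f"
  shows "smooth_real f"
proof -
  have "\<forall>n. times_differentiable n ((deriv ^^ k) f)" for k
  proof (induction k)
    case (Suc k)
    then show ?case using times_differentiable_deriv(1) by (metis funpow.simps(2) o_apply)
  qed (use assms in simp)
  then have "((deriv ^^ k) f has_real_derivative (deriv ^^ Suc k) f t) (at t)" for k t
    by (metis funpow.simps(2) o_apply times_differentiable_deriv(2))
  then show ?thesis
    unfolding smooth_real_def by (intro exI[of _ "\<lambda>k. (deriv ^^ k) f"]) auto
qed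

lemma smooth_real_isCont: "smooth_real g \<Longrightarrow> isCont g t"
  unfolding smooth_real_def by (metis DERIV_isCont)

lemma smooth_real_rescaled_series:
  fixes b s l :: "nat \<Rightarrow> real"
  assumes D: "\<forall>k t. (D k has_real_derivative D (Suc k) t) (at t)"
    and M: "\<forall>k t. \<bar>D k t\<bar> \<le> M k"
    and l: "\<forall>n. 0 < l n" and b: "\<forall>k. summable (\<lambda>n. \<bar>b n\<bar> / l n ^ k)"
  shows "smooth_real (\<lambda>t. \<Sum>n. b n * D 0 ((t - s n) / l n))"
proof -
  define f where "f k n t = b n / l n ^ k * D k ((t - s n) / l n)" for k n t
  have f_bound: "norm (f k n t) \<le> \<bar>b n\<bar> / l n ^ k * M k" for k n t
  proof -
    have "norm (f k n t) = \<bar>b n\<bar> / l n ^ k * \<bar>D k ((t - s n) / l n)\<bar>"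
      using l[rule_format, of n] by (simp add: f_def abs_mult)
    also have "\<dots> \<le> \<bar>b n\<bar> / l n ^ k * M k"
      using l[rule_format, of n] M by (intro mult_left_mono) auto
    finally show ?thesis .
  qed
  have summable_bound: "summable (\<lambda>n. \<bar>b n\<bar> / l n ^ k * M k)" for k
    using b by (intro summable_mult2) auto
  have f_deriv: "(f k n has_real_derivative f (Suc k) n t) (at t within UNIV)" for k n t
  proof -
    have "((\<lambda>t. (t - s n) / l n) has_real_derivative 1 / l n) (at t)"
      using l[rule_format, of n] by (auto intro!: derivative_eq_intros)
    from DERIV_cmult[OF DERIV_chain2[OF D[rule_format] this], of "b n / l n ^ k"]
    show ?thesis
      using l[rule_format, of n] by (simp add: f_def[abs_def] field_simps)
  qed
  have "((\<lambda>t. \<Sum>n. f k n t) has_real_derivative (\<Sum>n. f (Suc k) n t)) (at t)" for k t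
  proof (rule has_field_derivative_series'(2)[OF convex_UNIV f_deriv])
    show "uniformly_convergent_on UNIV (\<lambda>n t. \<Sum>i<n. f (Suc k) i t)"
      by (rule Weierstrass_m_test'[OF f_bound summable_bound])
    show "summable (\<lambda>n. f k n 0)"
      by (rule summable_comparison_test'[OF summable_bound f_bound])
  qed auto
  moreover have "(\<lambda>t. \<Sum>n. f 0 n t) = (\<lambda>t. \<Sum>n. b n * D 0 ((t - s n) / l n))"
    by (simp add: f_def)
  ultimately show ?thesis
    unfolding smooth_real_def by (intro exI[of _ "\<lambda>k t. \<Sum>n. f k n t"]) auto
qed

lemma smooth_real_add_const:
  assumes "smooth_real g"
  shows "smooth_real (\<lambda>t. c + g t)"
proof -
  from assms obtain D where D: "D 0 = g" "\<forall>n t. (D n has_real_derivative D (Suc n) t) (at t)"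
    unfolding smooth_real_def by blast
  define D' where "D' k = (if k = 0 then (\<lambda>t. c + g t) else D k)" for k
  have "(D' n has_real_derivative D' (Suc n) t) (at t)" for n t
    using D by (cases n) (auto simp: D'_def intro!: derivative_eq_intros)
  moreover have "D' 0 = (\<lambda>t. c + g t)"
    by (simp add: D'_def)
  ultimately show ?thesis
    unfolding smooth_real_def by blast
qed

lemma smooth_real_lipschitz_on_interval:
  assumes "smooth_real g"
  obtains M where "\<forall>s\<in>{a..b}. \<forall>t\<in>{a..b}. \<bar>g s - g t\<bar> \<le> M * \<bar>s - t\<bar>"
proof -
  from assms obtain D where D: "D 0 = g" "\<forall>n t. (D n has_real_derivative D (Suc n) t) (at t)"
    unfolding smooth_real_def by blast
  have "continuous_on {a..b} (D 1)"
    using D(2) by (intro continuous_at_imp_continuous_on) (auto intro: DERIV_isCont)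
  then obtain M where M: "\<forall>t\<in>{a..b}. \<bar>D 1 t\<bar> \<le> M"
    using compact_continuous_image[of "{a..b}" "D 1"]
    by (auto dest!: compact_imp_bounded simp: bounded_iff)
  have "(g has_real_derivative D 1 t) (at t within {a..b})" for t
    using D by (auto intro: has_field_derivative_at_within)
  then have "\<bar>g s - g t\<bar> \<le> M * \<bar>s - t\<bar>" if "s \<in> {a..b}" "t \<in> {a..b}" for s t
    using field_differentiable_bound[of "{a..b}" g "D 1" M s t] M that by auto
  with that show ?thesis by blast
qed

lemma derivative_zero_where_constant:
  assumes "\<forall>t. (g has_real_derivative g' t) (at t)" "open S" "\<forall>s\<in>S. g s = c" "t \<in> S"
  shows "g' t = 0"
proof -
  obtain d where "d > 0" "ball t d \<subseteq> S"
    using assms(2,4) openE by blast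
  then show ?thesis
    using assms by (intro DERIV_local_const[of g _ t d]) (auto simp: dist_real_def)
qed

section \<open>A smooth step function\<close>

definition flat_exp :: "real poly \<Rightarrow> real \<Rightarrow> real" where
  "flat_exp p t = (if t > 0 then poly p (1/t) * exp (- (1/t)) else 0)"

text \<open>For \<open>t > 0\<close> the derivative of \<open>p(1/t) e\<^sup>-\<^sup>1\<^sup>/\<^sup>t\<close> is
  \<open>t\<^sup>-\<^sup>2 (p(1/t) - p'(1/t)) e\<^sup>-\<^sup>1\<^sup>/\<^sup>t\<close>, i.e. again of this shape.\<close>
definition flat_exp_deriv_poly :: "real poly \<Rightarrow> real poly" where
  "flat_exp_deriv_poly p = [:0,0,1:] * (p - pderiv p)"

lemma tendsto_poly_exp_at_right_0:
  "((\<lambda>t. poly p (1/t) * exp (- (1/t))) \<longlongrightarrow> 0) (at_right (0::real))"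
proof -
  have "((\<lambda>u. \<Sum>i\<le>degree p. coeff p i * (u ^ i / exp u)) \<longlongrightarrow> (\<Sum>i\<le>degree p. coeff p i * 0)) at_top"
    by (intro tendsto_sum tendsto_mult tendsto_const tendsto_power_div_exp_0)
  moreover have "(\<Sum>i\<le>degree p. coeff p i * (u ^ i / exp u)) = poly p u * exp (- u)" for u
    by (simp add: poly_altdef sum_distrib_right exp_minus divide_inverse mult.assoc)
  ultimately have "((\<lambda>u. poly p u * exp (- u)) \<longlongrightarrow> 0) at_top"
    by simp
  moreover have "filterlim (\<lambda>t::real. 1/t) at_top (at_right 0)"
    using filterlim_inverse_at_top_right by (simp add: inverse_eq_divide)
  ultimately show ?thesis
    by (rule filterlim_compose)
qed

lemma flat_exp_has_derivative:
  "(flat_exp p has_real_derivative flat_exp (flat_exp_deriv_poly p) t) (at t)"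
proof -
  consider "t > 0" | "t < 0" | "t = 0" by linarith
  then show ?thesis
  proof cases
    case 1
    have "((\<lambda>t. poly p (1/t) * exp (- (1/t))) has_real_derivative
        poly (pderiv p) (1/t) * (- 1 / t^2) * exp (- (1/t)) + poly p (1/t) * (exp (- (1/t)) * (1 / t^2))) (at t)"
      using 1 by (auto intro!: derivative_eq_intros DERIV_chain2[OF poly_DERIV] simp: power2_eq_square)
    also have "poly (pderiv p) (1/t) * (- 1 / t^2) * exp (- (1/t)) + poly p (1/t) * (exp (- (1/t)) * (1 / t^2))
        = flat_exp (flat_exp_deriv_poly p) t"
      using 1 by (simp add: flat_exp_def flat_exp_deriv_poly_def poly_mult algebra_simps
          power2_eq_square divide_inverse)
    finally show ?thesis
      by (rule has_field_derivative_transform_within_open[where S="{0<..}"])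
        (auto simp: flat_exp_def 1)
  next
    case 2
    have "((\<lambda>t. 0) has_real_derivative flat_exp (flat_exp_deriv_poly p) t) (at t)"
      using 2 by (simp add: flat_exp_def)
    then show ?thesis
      by (rule has_field_derivative_transform_within_open[where S="{..<0}"])
        (auto simp: flat_exp_def 2)
  next
    case 3
    have "((\<lambda>y. flat_exp p y / y) \<longlongrightarrow> 0) (at 0)"
    proof (rule filterlim_split_at)
      have "eventually (\<lambda>y. 0 = flat_exp p y / y) (at_left (0::real))"
        by (rule eventually_mono[OF eventually_at_left_real[of "-1"]]) (auto simp: flat_exp_def)
      then show "((\<lambda>y. flat_exp p y / y) \<longlongrightarrow> 0) (at_left 0)"
        by (rule Lim_transform_eventually[OF tendsto_const])
      have "eventually (\<lambda>y. poly ([:0,1:] * p) (1/y) * exp (- (1/y)) = flat_exp p y / y)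
          (at_right (0::real))"
        by (rule eventually_mono[OF eventually_at_right_less]) (simp add: flat_exp_def)
      then show "((\<lambda>y. flat_exp p y / y) \<longlongrightarrow> 0) (at_right 0)"
        by (rule Lim_transform_eventually[OF tendsto_poly_exp_at_right_0])
    qed
    then show ?thesis
      using 3 by (simp add: has_field_derivative_iff flat_exp_def)
  qed
qed

lemma times_differentiable_flat_exp: "times_differentiable n (flat_exp p)"
  by (induction n arbitrary: p) (use flat_exp_has_derivative in auto)

definition smooth_step :: "real \<Rightarrow> real" where
  "smooth_step t = flat_exp 1 t / (flat_exp 1 t + flat_exp 1 (1 - t))"

lemma smooth_step_denominator_pos: "flat_exp 1 t + flat_exp 1 (1 - t) > 0"
  by (cases "t > 0") (auto simp: flat_exp_def add_pos_nonneg)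

lemma smooth_step_nonpos: "t \<le> 0 \<Longrightarrow> smooth_step t = 0"
  by (simp add: smooth_step_def flat_exp_def)

lemma smooth_step_ge_1: "t \<ge> 1 \<Longrightarrow> smooth_step t = 1"
  using smooth_step_denominator_pos[of t] by (simp add: smooth_step_def flat_exp_def)

lemma smooth_real_smooth_step: "smooth_real smooth_step"
proof (rule smooth_real_if_times_differentiable, rule allI)
  fix n
  have "times_differentiable n (\<lambda>t. flat_exp 1 t * inverse (flat_exp 1 t + flat_exp 1 ((- 1) * t + 1)))"
    using smooth_step_denominator_pos
    by (intro times_differentiable_mult times_differentiable_inverse times_differentiable_add
        times_differentiable_affine times_differentiable_flat_exp) (auto simp: order_less_imp_not_eq2)
  then show "times_differentiable n smooth_step"
    by (simp add: smooth_step_def[abs_def] divide_inverse)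
qed

lemma smooth_step_bounded_derivatives:
  obtains D M where "D 0 = smooth_step" "\<forall>k t. (D k has_real_derivative D (Suc k) t) (at t)"
    "\<forall>k t. \<bar>D k t\<bar> \<le> M k"
proof -
  obtain D where D0: "D 0 = smooth_step"
    and D: "\<forall>k t. (D k has_real_derivative D (Suc k) t) (at t)"
    using smooth_real_smooth_step unfolding smooth_real_def by blast
  have below: "t < 0 \<Longrightarrow> D k t = 0" for k t
  proof (induction k arbitrary: t)
    case (Suc k)
    then show ?case
      using D by (intro derivative_zero_where_constant[of "D k" "D (Suc k)" "{..<0}" 0]) auto
  qed (simp add: D0 smooth_step_nonpos)
  have above: "t > 1 \<Longrightarrow> D (Suc k) t = 0" for k t
  proof (induction k arbitrary: t)
    case 0
    then show ?case
      using D by (intro derivative_zero_where_constant[of "D 0" "D (Suc 0)" "{1<..}" 1], blast)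
        (auto simp: D0 smooth_step_ge_1)
  next
    case (Suc k)
    then show ?case
      using D by (intro derivative_zero_where_constant[of "D (Suc k)" "D (Suc (Suc k))" "{1<..}" 0]) auto
  qed
  have "\<exists>M. \<forall>t. \<bar>D k t\<bar> \<le> M" for k
  proof -
    have "continuous_on {0..1} (D k)"
      using D by (intro continuous_at_imp_continuous_on) (auto intro: DERIV_isCont)
    then obtain a where a: "\<forall>t\<in>{0..1}. \<bar>D k t\<bar> \<le> a"
      using compact_continuous_image[of "{0..1}" "D k"]
      by (auto dest!: compact_imp_bounded simp: bounded_iff)
    have "\<bar>D k t\<bar> \<le> max a 1" for t
      using a[rule_format, of t] below[of t k] above[of t "k - 1"]
      by (cases "t < 0"; cases "t > 1"; cases k) (auto simp: D0 smooth_step_ge_1 le_max_iff_disj)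
    then show ?thesis by blast
  qed
  then obtain M where "\<forall>k t. \<bar>D k t\<bar> \<le> M k"
    by metis
  with D0 D that show ?thesis by blast
qed

section \<open>Structure curves through rapidly converging sequences\<close>

definition tail_sum :: "(nat \<Rightarrow> real) \<Rightarrow> nat \<Rightarrow> real" where
  "tail_sum l m = (\<Sum>j. l (j + m))"

lemma tail_sum_Suc: "summable l \<Longrightarrow> tail_sum l m = l m + tail_sum l (Suc m)"
  using suminf_split_head[OF summable_ignore_initial_segment[of l m]] by (simp add: tail_sum_def)

lemma tail_sum_pos: "summable l \<Longrightarrow> \<forall>n. 0 < l n \<Longrightarrow> 0 < tail_sum l m"
  unfolding tail_sum_def by (intro suminf_pos summable_ignore_initial_segment) auto

lemma tail_sum_antimono:
  assumes "summable l" "\<forall>n. 0 < l n" "m \<le> n"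
  shows "tail_sum l n \<le> tail_sum l m"
  using assms(3)
proof (induction n rule: dec_induct)
  case (step n)
  then show ?case
    using tail_sum_Suc[OF assms(1), of n] assms(2) by (smt (verit))
qed simp

lemma tendsto_tail_sum: "summable l \<Longrightarrow> tail_sum l \<longlonglongrightarrow> 0"
proof -
  assume l: "summable l"
  have "tail_sum l = (\<lambda>m. suminf l - (\<Sum>i<m. l i))"
    by (simp add: tail_sum_def fun_eq_iff suminf_minus_initial_segment[OF l])
  moreover have "(\<lambda>m. suminf l - (\<Sum>i<m. l i)) \<longlonglongrightarrow> suminf l - suminf l"
    by (intro tendsto_diff tendsto_const summable_LIMSEQ l)
  ultimately show ?thesis
    by simp
qed

lemma summable_if_le_half_powers:
  fixes l :: "nat \<Rightarrow> real"
  assumes "\<forall>m. 0 < l m \<and> l m \<le> (1/2) ^ m"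
  shows "summable l"
  by (rule summable_comparison_test'[OF summable_geometric[of "1/2::real"], where N=0])
    (simp_all add: assms[rule_format] abs_of_pos)

lemma summable_div_power_if_rapid:
  fixes b l :: "nat \<Rightarrow> real"
  assumes l: "\<forall>m. 0 < l m \<and> l m \<le> 1"
    and rapid: "eventually (\<lambda>m. \<bar>b m\<bar> \<le> (l m / 2) ^ m) sequentially"
  shows "summable (\<lambda>m. \<bar>b m\<bar> / l m ^ k)"
proof (rule summable_comparison_test_ev[OF _ summable_geometric[of "1/2::real"]])
  have bound: "norm (\<bar>b m\<bar> / l m ^ k) \<le> (1/2) ^ m" if "\<bar>b m\<bar> \<le> (l m / 2) ^ m" "k \<le> m" for m
  proof -
    have "norm (\<bar>b m\<bar> / l m ^ k) \<le> (l m / 2) ^ m / l m ^ k"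
      using that l[rule_format, of m] by (auto intro!: divide_right_mono)
    also have "\<dots> = l m ^ (m - k) * (1/2) ^ m"
      using that l[rule_format, of m] by (simp add: power_divide power_diff)
    also have "\<dots> \<le> 1 * (1/2) ^ m"
      using l[rule_format, of m] by (intro mult_right_mono power_le_one) auto
    finally show ?thesis by simp
  qed
  show "eventually (\<lambda>m. norm (\<bar>b m\<bar> / l m ^ k) \<le> (1/2) ^ m) sequentially"
    using rapid eventually_ge_at_top[of k] by eventually_elim (use bound l in auto)
qed simp

definition step_series :: "(nat \<Rightarrow> real) \<Rightarrow> real \<Rightarrow> (nat \<Rightarrow> real) \<Rightarrow> real \<Rightarrow> real" where
  "step_series l L b t =
     L + (\<Sum>n. (b n - b (Suc n)) * smooth_step ((t - tail_sum l (Suc n)) / l n))"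

lemma smooth_real_step_series:
  assumes l: "\<forall>m. 0 < l m" and decay: "\<forall>k. summable (\<lambda>m. \<bar>b m - b (Suc m)\<bar> / l m ^ k)"
  shows "smooth_real (step_series l L b)"
proof -
  obtain D M where D: "D 0 = smooth_step" "\<forall>k t. (D k has_real_derivative D (Suc k) t) (at t)"
    "\<forall>k t. \<bar>D k t\<bar> \<le> M k"
    by (rule smooth_step_bounded_derivatives)
  show ?thesis
    using smooth_real_rescaled_series[OF D(2,3) l decay]
    unfolding D(1) step_series_def[abs_def] by (rule smooth_real_add_const)
qed

lemma step_series_at_0:
  assumes "\<forall>m. 0 < l m" "summable l"
  shows "step_series l L b 0 = L"
proof -
  have "smooth_step ((0 - tail_sum l (Suc n)) / l n) = 0" for n
    using tail_sum_pos[OF assms(2,1), of "Suc n"] assms(1)[rule_format, of n]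
    by (intro smooth_step_nonpos) simp
  then show ?thesis
    by (simp add: step_series_def)
qed

lemma step_series_at_tail_sum:
  assumes l: "\<forall>m. 0 < l m" "summable l" and b: "b \<longlonglongrightarrow> L"
  shows "step_series l L b (tail_sum l m) = b m"
proof -
  define S where "S = tail_sum l"
  text \<open>The \<open>n\<close>-th step rises from 0 to 1 on \<open>[S (Suc n), S n]\<close>, so at \<open>S m\<close>
    exactly the terms with \<open>n \<ge> m\<close> are switched on and the series telescopes.\<close>
  have switch: "(b n - b (Suc n)) * smooth_step ((S m - S (Suc n)) / l n) =
      (if m \<le> n then b n - b (Suc n) else 0)" for n
  proof (cases "m \<le> n")
    case True
    then have "1 \<le> (S m - S (Suc n)) / l n"
      using tail_sum_antimono[OF l(2,1) True] tail_sum_Suc[OF l(2), of n] l(1)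
      by (simp add: S_def)
    then show ?thesis
      using True by (simp add: smooth_step_ge_1)
  next
    case False
    then have "(S m - S (Suc n)) / l n \<le> 0"
      using tail_sum_antimono[OF l(2,1), of "Suc n" m] l(1)[rule_format, of n]
      by (simp add: S_def divide_nonpos_pos)
    then show ?thesis
      using False by (simp add: smooth_step_nonpos)
  qed
  have "(\<lambda>j. b (j + m)) \<longlonglongrightarrow> L"
    using LIMSEQ_ignore_initial_segment[OF b, of m] by simp
  from telescope_sums'[OF this]
  have "(\<lambda>n. if m \<le> n then b n - b (Suc n) else 0) sums (b m - L)"
    by (subst sums_zero_iff_shift[of m, symmetric]) auto
  then show ?thesis
    by (simp add: step_series_def switch sums_iff flip: S_def)
qed

lemma structure_curve_through_sequence:
  fixes a :: "nat \<Rightarrow> nat \<Rightarrow> real" and L l :: "nat \<Rightarrow> real"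
  assumes l: "\<forall>m. 0 < l m" "summable l"
    and conv: "\<forall>i. (\<lambda>m. a m i) \<longlonglongrightarrow> L i"
    and decay: "\<forall>i k. summable (\<lambda>m. \<bar>a m i - a (Suc m) i\<bar> / l m ^ k)"
  obtains c where "structure_curve c" "c 0 = L" "\<forall>m. c (tail_sum l m) = a m"
proof
  define c where "c t i = step_series l (L i) (\<lambda>m. a m i) t" for t i
  show "structure_curve c"
    using smooth_real_step_series[OF l(1)] decay by (simp add: structure_curve_def c_def[abs_def])
  show "c 0 = L"
    using step_series_at_0[OF l] by (simp add: c_def fun_eq_iff)
  show "\<forall>m. c (tail_sum l m) = a m"
    using step_series_at_tail_sum[OF l] conv by (simp add: c_def fun_eq_iff)
qed

lemma structure_curve_through_rapid_sequence:
  fixes a :: "nat \<Rightarrow> nat \<Rightarrow> real" and L l :: "nat \<Rightarrow> real"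
  assumes l: "\<forall>m. 0 < l m \<and> l m \<le> (1/2) ^ m"
    and conv: "\<forall>i. (\<lambda>m. a m i) \<longlonglongrightarrow> L i"
    and rapid: "\<forall>i. eventually (\<lambda>m. \<bar>a m i - a (Suc m) i\<bar> \<le> (l m / 2) ^ m) sequentially"
  obtains c where "structure_curve c" "c 0 = L" "\<forall>m. c (tail_sum l m) = a m"
proof (rule structure_curve_through_sequence[OF _ _ conv])
  have "l m \<le> 1" for m
    using l[rule_format, of m] power_le_one[of "1/2::real" m] by linarith
  then show "\<forall>i k. summable (\<lambda>m. \<bar>a m i - a (Suc m) i\<bar> / l m ^ k)"
    using l rapid summable_div_power_if_rapid by simp
  show "summable l"
    by (rule summable_if_le_half_powers[OF l])
  show "\<forall>m. 0 < l m"
    using l by simp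
qed

lemma Cinf_RN_along_rapid_sequence:
  fixes a :: "nat \<Rightarrow> nat \<Rightarrow> real" and L l :: "nat \<Rightarrow> real"
  assumes f: "f \<in> Cinf_RN"
    and l: "\<forall>m. 0 < l m \<and> l m \<le> (1/2) ^ m"
    and conv: "\<forall>i. (\<lambda>m. a m i) \<longlonglongrightarrow> L i"
    and rapid: "\<forall>i. eventually (\<lambda>m. \<bar>a m i - a (Suc m) i\<bar> \<le> (l m / 2) ^ m) sequentially"
  shows "(\<lambda>m. f (a m)) \<longlonglongrightarrow> f L"
    and "\<exists>M. \<forall>m. \<bar>f (a m) - f (a (Suc m))\<bar> \<le> M * l m"
proof -
  obtain c where c: "structure_curve c" "c 0 = L" "\<forall>m. c (tail_sum l m) = a m"
    using structure_curve_through_rapid_sequence[OF l conv rapid] by blast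
  have g: "smooth_real (f \<circ> c)"
    using f c(1) by (simp add: Cinf_RN_def)
  have summable: "summable l"
    by (rule summable_if_le_half_powers[OF l])
  have "(\<lambda>m. (f \<circ> c) (tail_sum l m)) \<longlonglongrightarrow> (f \<circ> c) 0"
    using isCont_tendsto_compose[OF smooth_real_isCont[OF g] tendsto_tail_sum[OF summable]] .
  then show "(\<lambda>m. f (a m)) \<longlonglongrightarrow> f L"
    using c(2,3) by simp
  obtain M where M: "\<forall>s\<in>{0..tail_sum l 0}. \<forall>t\<in>{0..tail_sum l 0}.
      \<bar>(f \<circ> c) s - (f \<circ> c) t\<bar> \<le> M * \<bar>s - t\<bar>"
    using smooth_real_lipschitz_on_interval[OF g] by blast
  have "\<bar>f (a m) - f (a (Suc m))\<bar> \<le> M * l m" for m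
  proof -
    have l_pos: "\<forall>m. 0 < l m"
      using l by blast
    have "tail_sum l k \<in> {0..tail_sum l 0}" for k
      using tail_sum_pos[OF summable l_pos, of k] tail_sum_antimono[OF summable l_pos, of 0 k]
      by simp
    then have "\<bar>f (a m) - f (a (Suc m))\<bar> \<le> M * \<bar>tail_sum l m - tail_sum l (Suc m)\<bar>"
      using M c(3) by (metis comp_apply)
    also have "tail_sum l m - tail_sum l (Suc m) = l m"
      using tail_sum_Suc[OF summable, of m] by simp
    finally show ?thesis
      using l_pos[rule_format, of m] by simp
  qed
  then show "\<exists>M. \<forall>m. \<bar>f (a m) - f (a (Suc m))\<bar> \<le> M * l m"
    by blast
qed

section \<open>Smooth functions on \<open>\<real>\<^sup>\<nat>\<close>\<close>

text \<open>\<open>rate m\<close> is the bound \<open>(l/2)\<^sup>m\<close> of the rapid-convergence condition for the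
  geometric step lengths \<open>l = 2\<^sup>-\<^sup>m\<close>.\<close>
definition rate :: "nat \<Rightarrow> real" where
  "rate m = ((1/2) ^ m / 2) ^ m"

lemma rate_eq_power: "rate m = (1/2) ^ (m * Suc m)"
proof -
  have "rate m = ((1/2) ^ Suc m) ^ m"
    by (simp add: rate_def)
  also have "\<dots> = (1/2) ^ (m * Suc m)"
    by (subst mult.commute) (rule power_mult[symmetric])
  finally show ?thesis .
qed

lemma rate_pos: "0 < rate m"
  by (simp add: rate_def)

lemma rate_antimono: "m \<le> n \<Longrightarrow> rate n \<le> rate m"
  unfolding rate_eq_power by (intro power_decreasing mult_le_mono) auto

lemma tendsto_if_rate_bound:
  assumes "eventually (\<lambda>m. \<bar>X m - y\<bar> \<le> rate m) sequentially"
  shows "X \<longlonglongrightarrow> y"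
proof -
  have "rate \<longlonglongrightarrow> 0"
  proof (rule tendsto_sandwich[of "\<lambda>_. 0" rate sequentially "\<lambda>m. (1/2::real) ^ m"])
    show "eventually (\<lambda>m. 0 \<le> rate m) sequentially"
      using rate_pos by (simp add: less_imp_le)
    show "eventually (\<lambda>m. rate m \<le> (1/2) ^ m) sequentially"
      unfolding rate_eq_power by (intro always_eventually allI power_decreasing) auto
    show "(\<lambda>m. (1/2::real) ^ m) \<longlonglongrightarrow> 0"
      by (rule LIMSEQ_realpow_zero) auto
  qed simp
  then have "(\<lambda>m. X m - y) \<longlonglongrightarrow> 0"
    by (rule Lim_null_comparison[rotated]) (use assms in simp)
  then show ?thesis
    by (simp add: LIM_zero_iff)
qed

lemma Cinf_RN_tendsto_if_rate_close:
  assumes f: "f \<in> Cinf_RN" and close: "\<forall>m i. \<bar>a m i - p i\<bar> \<le> rate m / 2"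
  shows "(\<lambda>m. f (a m)) \<longlonglongrightarrow> f p"
proof (rule Cinf_RN_along_rapid_sequence(1)[OF f, where l="\<lambda>m. (1/2) ^ m"])
  have "\<bar>a m i - p i\<bar> \<le> rate m" for m i
    using close[rule_format, of m i] rate_pos[of m] by linarith
  then show "\<forall>i. (\<lambda>m. a m i) \<longlonglongrightarrow> p i"
    by (intro allI tendsto_if_rate_bound always_eventually) auto
  have "\<bar>a m i - a (Suc m) i\<bar> \<le> ((1/2) ^ m / 2) ^ m" for m i
    using close[rule_format, of m i] close[rule_format, of "Suc m" i] rate_antimono[of m "Suc m"]
    unfolding rate_def by linarith
  then show "\<forall>i. eventually (\<lambda>m. \<bar>a m i - a (Suc m) i\<bar> \<le> ((1/2) ^ m / 2) ^ m) sequentially"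
    by simp
qed simp

lemma Cinf_RN_tendsto_on_finite_slice:
  fixes f :: "(nat \<Rightarrow> real) \<Rightarrow> real"
  assumes f: "f \<in> Cinf_RN" and q: "q \<longlonglongrightarrow> p" and tail: "\<forall>k i. n \<le> i \<longrightarrow> q k i = p i"
  shows "(\<lambda>k. f (q k)) \<longlonglongrightarrow> f p"
proof (rule ccontr)
  assume "\<not> ?thesis"
  then obtain e where e: "0 < e" "\<not> eventually (\<lambda>k. dist (f (q k)) (f p) < e) sequentially"
    unfolding tendsto_iff by auto
  then have far: "frequently (\<lambda>k. \<not> dist (f (q k)) (f p) < e) sequentially"
    by (simp add: not_eventually)
  have "\<exists>k. \<not> dist (f (q k)) (f p) < e \<and> (\<forall>i\<in>{..<n}. \<bar>q k i - p i\<bar> < rate m / 2)" for m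
  proof -
    have "eventually (\<lambda>k. \<bar>q k i - p i\<bar> < rate m / 2) sequentially" for i
    proof -
      have "(\<lambda>k. q k i) \<longlonglongrightarrow> p i"
        using continuous_on_tendsto_compose[OF continuous_on_product_coordinates q] by simp
      from tendstoD[OF this, of "rate m / 2"] show ?thesis
        using rate_pos[of m] by (simp add: dist_real_def)
    qed
    then have "eventually (\<lambda>k. \<forall>i\<in>{..<n}. \<bar>q k i - p i\<bar> < rate m / 2) sequentially"
      by (intro eventually_ball_finite) auto
    from frequently_ex[OF frequently_eventually_frequently[OF far this]] show ?thesis .
  qed
  then obtain K where K: "\<forall>m. \<not> dist (f (q (K m))) (f p) < e \<and>
      (\<forall>i\<in>{..<n}. \<bar>q (K m) i - p i\<bar> < rate m / 2)"
    by metis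
  have "\<forall>m i. \<bar>q (K m) i - p i\<bar> \<le> rate m / 2"
    using K tail rate_pos by (metis abs_zero diff_self half_gt_zero less_imp_le lessThan_iff not_le)
  from Cinf_RN_tendsto_if_rate_close[OF f this]
  obtain N where "\<forall>m\<ge>N. dist (f (q (K m))) (f p) < e"
    using e(1) unfolding tendsto_iff eventually_sequentially by blast
  with K show False
    by blast
qed

lemma Cinf_RN_continuous_on_finite_slice:
  assumes f: "f \<in> Cinf_RN"
  shows "continuous_on UNIV (\<lambda>w. f (\<lambda>i. if i < n then w i else x i))"
proof (rule continuous_on_sequentiallyI)
  fix u :: "nat \<Rightarrow> nat \<Rightarrow> real" and w
  assume "u \<longlonglongrightarrow> w"
  have "continuous_on UNIV (\<lambda>w. \<lambda>i::nat. if i < n then w i else x i)"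
  proof (intro continuous_on_coordinatewise_then_product)
    show "continuous_on UNIV (\<lambda>w. if i < n then w i else x i)" for i
      by (cases "i < n") auto
  qed
  from continuous_on_tendsto_compose[OF this \<open>u \<longlonglongrightarrow> w\<close>]
  have "(\<lambda>k i. if i < n then u k i else x i) \<longlonglongrightarrow> (\<lambda>i. if i < n then w i else x i)"
    by simp
  then show "(\<lambda>k. f (\<lambda>i. if i < n then u k i else x i)) \<longlonglongrightarrow> f (\<lambda>i. if i < n then w i else x i)"
    by (rule Cinf_RN_tendsto_on_finite_slice[OF f, where n=n]) auto
qed

lemma interleaved_sequence_close:
  fixes Y Z :: "nat \<Rightarrow> nat \<Rightarrow> real"
  assumes near: "\<forall>k. \<forall>i<k. \<bar>Y k i - x i\<bar> < rate (2 * k + 1) / 2 \<and> Y k i = Z k i"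
    and m: "2 * i + 2 \<le> m"
  defines "a \<equiv> \<lambda>m. if even m then Y (m div 2) else Z (m div 2)"
  shows "\<bar>a m i - x i\<bar> \<le> rate m / 2" and "even m \<Longrightarrow> a (Suc m) i = a m i"
proof -
  have "i < m div 2"
    using m by auto
  then have "\<bar>Y (m div 2) i - x i\<bar> < rate (2 * (m div 2) + 1) / 2 \<and> Y (m div 2) i = Z (m div 2) i"
    using near by blast
  then show "\<bar>a m i - x i\<bar> \<le> rate m / 2" "even m \<Longrightarrow> a (Suc m) i = a m i"
    using rate_antimono[of m "2 * (m div 2) + 1"] unfolding a_def by (cases "even m"; simp)+
qed

lemma interleaved_sequence_rapid:
  fixes Y Z :: "nat \<Rightarrow> nat \<Rightarrow> real" and h :: "nat \<Rightarrow> real"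
  assumes near: "\<forall>k. \<forall>i<k. \<bar>Y k i - x i\<bar> < rate (2 * k + 1) / 2 \<and> Y k i = Z k i"
    and h: "\<forall>k. 0 < h k \<and> h k \<le> (1/2) ^ (2 * k)"
  defines "a \<equiv> \<lambda>m. if even m then Y (m div 2) else Z (m div 2)"
    and "l \<equiv> \<lambda>m. if even m then h (m div 2) else (1/2) ^ m"
  shows "\<forall>m. 0 < l m \<and> l m \<le> (1/2) ^ m"
    and "\<forall>i. (\<lambda>m. a m i) \<longlonglongrightarrow> x i"
    and "\<forall>i. eventually (\<lambda>m. \<bar>a m i - a (Suc m) i\<bar> \<le> (l m / 2) ^ m) sequentially"
proof -
  note close = interleaved_sequence_close[OF near]
  show "\<forall>m. 0 < l m \<and> l m \<le> (1/2) ^ m"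
    using h by (auto simp: l_def)
  show "\<forall>i. (\<lambda>m. a m i) \<longlonglongrightarrow> x i"
  proof
    fix i
    have "\<bar>a m i - x i\<bar> \<le> rate m" if "2 * i + 2 \<le> m" for m
      using close(1)[OF that] rate_pos[of m] unfolding a_def by linarith
    then show "(\<lambda>m. a m i) \<longlonglongrightarrow> x i"
      by (intro tendsto_if_rate_bound eventually_sequentiallyI)
  qed
  text \<open>Even steps go from \<open>Y k\<close> to \<open>Z k\<close> and do not move the first \<open>k\<close> coordinates;
    odd steps have the geometric length \<open>2\<^sup>-\<^sup>m\<close>, for which the bound is \<open>rate m\<close>.\<close>
  have "\<bar>a m i - a (Suc m) i\<bar> \<le> (l m / 2) ^ m" if "2 * i + 2 \<le> m" for m i
  proof (cases "even m")
    case True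
    then show ?thesis
      using close(2)[OF that] h unfolding a_def by (simp add: l_def less_imp_le)
  next
    case False
    have "\<bar>a m i - a (Suc m) i\<bar> \<le> rate m / 2 + rate (Suc m) / 2"
      using close(1)[OF that] close(1)[OF le_SucI[OF that]] unfolding a_def by linarith
    also have "\<dots> \<le> rate m"
      using rate_antimono[of m "Suc m"] by simp
    finally show ?thesis
      using False by (simp add: l_def rate_def)
  qed
  then show "\<forall>i. eventually (\<lambda>m. \<bar>a m i - a (Suc m) i\<bar> \<le> (l m / 2) ^ m) sequentially"
    by (intro allI eventually_sequentiallyI)
qed

lemma Cinf_RN_interleaved_jumps_bounded:
  fixes Y Z :: "nat \<Rightarrow> nat \<Rightarrow> real" and h :: "nat \<Rightarrow> real"
  assumes f: "f \<in> Cinf_RN"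
    and near: "\<forall>k. \<forall>i<k. \<bar>Y k i - x i\<bar> < rate (2 * k + 1) / 2 \<and> Y k i = Z k i"
    and h: "\<forall>k. 0 < h k \<and> h k \<le> (1/2) ^ (2 * k)"
  obtains M where "\<forall>k. \<bar>f (Y k) - f (Z k)\<bar> \<le> M * h k"
proof -
  obtain M where M: "\<forall>m. \<bar>f (if even m then Y (m div 2) else Z (m div 2)) -
      f (if even (Suc m) then Y (Suc m div 2) else Z (Suc m div 2))\<bar>
      \<le> M * (if even m then h (m div 2) else (1/2) ^ m)"
    using Cinf_RN_along_rapid_sequence(2)[OF f interleaved_sequence_rapid[OF near h]] by blast
  have "\<bar>f (Y k) - f (Z k)\<bar> \<le> M * h k" for k
    using M[rule_format, of "2 * k"] by simp
  with that show ?thesis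
    by blast
qed

lemma Cinf_RN_locally_finitely_determined:
  fixes f :: "(nat \<Rightarrow> real) \<Rightarrow> real" and x :: "nat \<Rightarrow> real"
  assumes f: "f \<in> Cinf_RN"
  obtains n r where "0 < r" "\<forall>y z. (\<forall>i<n. \<bar>y i - x i\<bar> < r \<and> y i = z i) \<longrightarrow> f y = f z"
proof -
  define r where "r k = rate (2 * k + 1) / 2" for k
  have "\<exists>k. \<forall>y z. (\<forall>i<k. \<bar>y i - x i\<bar> < r k \<and> y i = z i) \<longrightarrow> f y = f z"
  proof (rule ccontr)
    assume "\<not> ?thesis"
    then obtain Y Z where YZ: "\<forall>k. (\<forall>i<k. \<bar>Y k i - x i\<bar> < r k \<and> Y k i = Z k i) \<and> f (Y k) \<noteq> f (Z k)"
      by metis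
    define d where "d k = \<bar>f (Y k) - f (Z k)\<bar>" for k
    have d_pos: "0 < d k" for k
      using YZ by (simp add: d_def)
    define h where "h k = min ((1/2) ^ (2 * k)) (d k / (real k + 1))" for k
    have h: "\<forall>k. 0 < h k \<and> h k \<le> (1/2) ^ (2 * k)"
      using d_pos by (simp add: h_def)
    obtain M where M: "\<forall>k. d k \<le> M * h k"
      using Cinf_RN_interleaved_jumps_bounded[OF f _ h, of Y x Z] YZ
      unfolding d_def r_def by blast
    have "real k + 1 \<le> M" for k
    proof -
      have "0 < M * h k"
        using M d_pos[of k] by (smt (verit))
      then have "0 \<le> M"
        using h zero_less_mult_pos2 less_imp_le by blast
      have "d k \<le> M * h k"
        using M by blast
      also have "\<dots> \<le> M * (d k / (real k + 1))"
        using \<open>0 \<le> M\<close> by (intro mult_left_mono) (simp_all add: h_def)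
      finally have "d k \<le> M * (d k / (real k + 1))" .
      then have "(real k + 1) * d k \<le> M * d k"
        using d_pos[of k] by (simp add: field_simps)
      then show ?thesis
        using mult_le_cancel_right_pos[OF d_pos[of k]] by blast
    qed
    moreover obtain k where "M < real k"
      using reals_Archimedean2 by blast
    ultimately show False
      by (smt (verit))
  qed
  then obtain k where "\<forall>y z. (\<forall>i<k. \<bar>y i - x i\<bar> < r k \<and> y i = z i) \<longrightarrow> f y = f z"
    by blast
  moreover have "0 < r k"
    by (simp add: r_def rate_pos)
  ultimately show ?thesis
    using that by blast
qed

theorem proposition6:
  fixes f :: "(nat \<Rightarrow> real) \<Rightarrow> real" and x :: "nat \<Rightarrow> real"
  assumes "f \<in> Cinf_RN"
  shows "\<exists>U N0 (g :: (nat \<Rightarrow> real) \<Rightarrow> real). open U \<and> x \<in> U \<and> finite N0 \<and>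
           continuous_on (cyl_proj N0 ` U) g \<and>
           (\<forall>y\<in>U. f y = g (cyl_proj N0 y))"
proof -
  obtain n r where r: "0 < r"
    and determined: "\<forall>y z. (\<forall>i<n. \<bar>y i - x i\<bar> < r \<and> y i = z i) \<longrightarrow> f y = f z"
    by (rule Cinf_RN_locally_finitely_determined[OF assms])
  define U where "U = {y. \<forall>i\<in>{..<n}. y i \<in> ball (x i) r}"
  define g where "g w = f (\<lambda>i. if i < n then w i else x i)" for w
  have "open U"
    unfolding U_def by (rule product_topology_basis'[where x="\<lambda>i. i"]) auto
  moreover have "x \<in> U"
    using r by (simp add: U_def)
  moreover have "continuous_on (cyl_proj {..<n} ` U) g"
    unfolding g_def using Cinf_RN_continuous_on_finite_slice[OF assms]
    by (rule continuous_on_subset) simp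
  moreover have "f y = g (cyl_proj {..<n} y)" if "y \<in> U" for y
    using that determined[rule_format, of y "\<lambda>i. if i < n then y i else x i"]
    by (simp add: U_def g_def cyl_proj_def dist_real_def abs_minus_commute cong: if_cong)
  ultimately show ?thesis
    by blast
qed

end
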